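(* Let $f \in \mathbb{N}_0[x^{\pm 1}]$ be such that $f(1)$ is a prime number. Then $f$ is irreducible in $\mathbb{N}_0[x^{\pm 1}]$.
   Context: $\mathbb{N}_0[x^{\pm 1}]$ denotes the semiring of Laurent polynomials in $x$ with nonnegative integer coefficients. Its units are exactly the monomials $x^k$, $k \in \mathbb{Z}$. An element $f$ is irreducible if it is nonzero, not a unit, and whenever $f = gh$ with $g,h \in \mathbb{N}_0[x^{\pm 1}]$, one of $g,h$ is a unit. *)

theory Defs
  imports "HOL-Library.Poly_Mapping" "HOL-Computational_Algebra.Computational_Algebra"
begin

text \<open>The semiring N_0[x^{+-1}] of Laurent polynomials with nonnegative integer
coefficients is modelled as the monoid semiring of (int, +) over nat:
a finitely supported map from exponents k::int to coefficients.\<close>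

type_synonym laurent_N0 = "int \<Rightarrow>\<^sub>0 nat"

definition eval_at_one :: "laurent_N0 \<Rightarrow> nat" where
  "eval_at_one f = (\<Sum>k\<in>Poly_Mapping.keys f. Poly_Mapping.lookup f k)"

end

theory Submission
  imports Defs
begin

text \<open>Evaluation at x = 1 is a semiring homomorphism to the coefficients, so a factorisation
  f = a * b gives f(1) = a(1) * b(1), and primality forces a(1) = 1 or b(1) = 1. Since the
  coefficients are nonnegative integers, a(1) = 1 means that a is a monomial x^k, which is a unit.\<close>

definition coeff_sum :: "('a \<Rightarrow>\<^sub>0 'b::comm_monoid_add) \<Rightarrow> 'b" where
  "coeff_sum f = (\<Sum>k\<in>Poly_Mapping.keys f. Poly_Mapping.lookup f k)"

lemma eval_at_one_eq_coeff_sum: "eval_at_one = coeff_sum"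
  by (simp add: fun_eq_iff eval_at_one_def coeff_sum_def)

lemma coeff_sum_zero [simp]: "coeff_sum 0 = 0"
  by (simp add: coeff_sum_def)

lemma coeff_sum_single [simp]: "coeff_sum (Poly_Mapping.single k a) = a"
  by (simp add: coeff_sum_def)

lemma coeff_sum_add [simp]: "coeff_sum (p + q) = coeff_sum p + coeff_sum q"
  unfolding coeff_sum_def by (rule setsum_keys_plus_distrib[where f = "\<lambda>k v. v"]) auto

lemma update_eq_add_single:
  "k \<notin> Poly_Mapping.keys f \<Longrightarrow> Poly_Mapping.update k a f = f + Poly_Mapping.single k a"
  by (rule poly_mapping_eqI)
     (auto simp: lookup_update lookup_add lookup_single in_keys_iff when_def)

lemma add_single_induct [case_names zero add_single]:
  assumes "P 0"
    and "\<And>f k a. P f \<Longrightarrow> P (f + Poly_Mapping.single k a)"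
  shows "P f"
  using assms by (induction f rule: update_induct) (simp_all add: update_eq_add_single)

lemma coeff_sum_single_mult:
  fixes g :: "'a::monoid_add \<Rightarrow>\<^sub>0 'b::semiring_0"
  shows "coeff_sum (Poly_Mapping.single k a * g) = a * coeff_sum g"
  by (induction g rule: add_single_induct) (simp_all add: distrib_left mult_single)

lemma coeff_sum_mult:
  fixes f g :: "'a::monoid_add \<Rightarrow>\<^sub>0 'b::semiring_0"
  shows "coeff_sum (f * g) = coeff_sum f * coeff_sum g"
  by (induction f rule: add_single_induct) (simp_all add: distrib_right coeff_sum_single_mult)

lemma coeff_sum_one [simp]: "coeff_sum (1 :: 'a::monoid_add \<Rightarrow>\<^sub>0 'b::semiring_1) = 1"
  by (simp flip: single_one)

lemma coeff_sum_eq_1_iff: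
  fixes f :: "'a \<Rightarrow>\<^sub>0 nat"
  shows "coeff_sum f = 1 \<longleftrightarrow> (\<exists>k. f = Poly_Mapping.single k 1)"
proof
  assume sum_1: "coeff_sum f = 1"
  then obtain k where k: "k \<in> Poly_Mapping.keys f"
    by (fastforce simp: coeff_sum_def)
  have split_sum: "Poly_Mapping.lookup f k + (\<Sum>j\<in>Poly_Mapping.keys f - {k}. Poly_Mapping.lookup f j) = 1"
    using sum_1 sum.remove[OF finite_keys k, of "Poly_Mapping.lookup f"]
    unfolding coeff_sum_def by simp
  have coeff_k_pos: "Poly_Mapping.lookup f k \<ge> 1"
    using k by (simp add: in_keys_iff)
  have "(\<Sum>j\<in>Poly_Mapping.keys f - {k}. Poly_Mapping.lookup f j) = 0"
    using split_sum coeff_k_pos by linarith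
  then have "Poly_Mapping.keys f = {k}"
    using k by (auto simp: in_keys_iff)
  moreover have "Poly_Mapping.lookup f k = 1"
    using split_sum coeff_k_pos \<open>Poly_Mapping.keys f = {k}\<close> by simp
  ultimately have "f = Poly_Mapping.single k 1"
    by (intro poly_mapping_eqI) (auto simp: lookup_single when_def in_keys_iff)
  then show "\<exists>k. f = Poly_Mapping.single k 1" ..
qed auto

lemma is_unit_single_one:
  "(Poly_Mapping.single k 1 :: 'a::ab_group_add \<Rightarrow>\<^sub>0 'b::comm_semiring_1) dvd 1"
proof (rule dvdI)
  show "1 = Poly_Mapping.single k 1 * (Poly_Mapping.single (- k) 1 :: 'a \<Rightarrow>\<^sub>0 'b)"
    by (simp add: mult_single)
qed

lemma is_unit_iff_coeff_sum_eq_1: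
  fixes f :: "'a::ab_group_add \<Rightarrow>\<^sub>0 nat"
  shows "f dvd 1 \<longleftrightarrow> coeff_sum f = 1"
proof
  assume "f dvd 1"
  then obtain g where "1 = f * g"
    by (rule dvdE)
  then have "coeff_sum f * coeff_sum g = 1"
    by (metis coeff_sum_mult coeff_sum_one)
  then show "coeff_sum f = 1"
    by simp
next
  assume "coeff_sum f = 1"
  then obtain k where "f = Poly_Mapping.single k 1"
    by (auto simp only: coeff_sum_eq_1_iff)
  then show "f dvd 1"
    by (simp only: is_unit_single_one)
qed

theorem lemma2p1:
  fixes f :: laurent_N0
  assumes "prime (eval_at_one f)"
  shows "irreducible f"
proof (rule irreducibleI)
  have prime_sum: "prime (coeff_sum f)"
    using assms by (simp add: eval_at_one_eq_coeff_sum)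
  then show "f \<noteq> 0"
    by auto
  have "coeff_sum f \<noteq> 1"
    using prime_sum by auto
  then show "\<not> f dvd 1"
    unfolding is_unit_iff_coeff_sum_eq_1 .
  fix a b
  assume "f = a * b"
  then have "prime (coeff_sum a * coeff_sum b)"
    using prime_sum by (simp add: coeff_sum_mult)
  then have "coeff_sum a = 1 \<or> coeff_sum b = 1"
    by (rule prime_product)
  then show "a dvd 1 \<or> b dvd 1"
    unfolding is_unit_iff_coeff_sum_eq_1 .
qed

end
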